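(* Let $q=\{q_n\}_{n\geq1}$ be a system of Beurling primes with $\sigma_c(\zeta_q)<\infty$. Then for almost every $x\in\mathbb{R}$, $$\mu_q(x)\leq 2\sigma_c(\zeta_q).$$
   Context: A system of Beurling primes is an increasing sequence $q=\{q_n\}$ of real numbers with $1<q_n\to\infty$ such that $\{\log q_n\}$ is linearly independent over $\mathbb{Q}$; its Beurling integers $\{\nu_n\}_{n\geq1}$ are all finite products of elements of $q$ (including $1$), listed increasingly. $\zeta_q(s)=\sum_n\nu_n^{-s}$ and $\sigma_c(\zeta_q)$ is its abscissa of convergence. For $x\in\mathbb{R}$, the $q$-irrationality measure $\mu_q(x)$ is the infimum of the set of $r>0$ such that $|x-\nu_m/\nu_n|<\nu_n^{-r}$ holds for at most finitely many pairs $(m,n)\in\mathbb{N}\times\mathbb{N}$. *)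

theory Defs
  imports "HOL-Analysis.Analysis"
begin

text \<open>A system of Beurling primes, indexed from 0: a strictly increasing real sequence
  with all terms > 1, tending to infinity, whose logarithms are linearly independent over Q.\<close>
definition beurling_primes :: "(nat \<Rightarrow> real) \<Rightarrow> bool" where
  "beurling_primes q \<longleftrightarrow>
     strict_mono q \<and> (\<forall>n. 1 < q n) \<and> filterlim q at_top sequentially \<and>
     (\<forall>F (c :: nat \<Rightarrow> rat). finite F \<longrightarrow>
        (\<Sum>i\<in>F. of_rat (c i) * ln (q i)) = 0 \<longrightarrow> (\<forall>i\<in>F. c i = 0))"

definition beurling_integers :: "(nat \<Rightarrow> real) \<Rightarrow> real set" where
  "beurling_integers q = {prod_list (map q xs) | xs. True}"

text \<open>The Beurling integers listed increasingly (indexed from 0).\<close>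
definition beurling_nu :: "(nat \<Rightarrow> real) \<Rightarrow> nat \<Rightarrow> real" where
  "beurling_nu q = (SOME f. strict_mono f \<and> range f = beurling_integers q)"

definition beurling_sigma_c :: "(nat \<Rightarrow> real) \<Rightarrow> ereal" where
  "beurling_sigma_c q =
     Inf {ereal (Re s) | s :: complex.
            summable (\<lambda>n. complex_of_real (beurling_nu q n) powr (- s))}"

text \<open>The q-irrationality measure of x (as an extended real; Inf of the empty set is \<infinity>).\<close>
definition beurling_mu :: "(nat \<Rightarrow> real) \<Rightarrow> real \<Rightarrow> ereal" where
  "beurling_mu q x =
     Inf {ereal r | r. r > 0 \<and>
            finite {(m, n). \<bar>x - beurling_nu q m / beurling_nu q n\<bar> < beurling_nu q n powr (- r)}}"

end

theory Submission
  imports Defs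
begin

text \<open>Convergence of \<open>\<zeta>\<^sub>q(s)\<close> at some \<open>Re s < \<sigma>\<^sub>1\<close> gives, by partial summation, the
  counting bound \<open>n + 1 \<le> C \<nu>\<^sub>n^\<sigma>\<^sub>1\<close>. Fix \<open>r > 2\<sigma>\<^sub>1\<close> and \<open>K > |x|\<close>. For the denominator \<open>\<nu>\<^sub>n\<close>
  only the \<open>O((K \<nu>\<^sub>n)^\<sigma>\<^sub>1)\<close> numerators \<open>\<nu>\<^sub>m \<le> (K + 1) \<nu>\<^sub>n\<close> matter, so the points within
  \<open>\<nu>\<^sub>n^-r\<close> of one of the fractions \<open>\<nu>\<^sub>m/\<nu>\<^sub>n\<close> form a set of measure \<open>O(\<nu>\<^sub>n^(\<sigma>\<^sub>1 - r))\<close>.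
  This is summable in \<open>n\<close>, because \<open>\<nu>\<^sub>n\<close> grows at least like \<open>n^(1/\<sigma>\<^sub>1)\<close> and \<open>r - \<sigma>\<^sub>1 > \<sigma>\<^sub>1\<close>.
  By Borel--Cantelli almost every \<open>x\<close> has only finitely many approximations of order \<open>r\<close>,
  so \<open>\<mu>\<^sub>q(x) \<le> r\<close>, and \<open>r\<close> can be taken arbitrarily close to \<open>2\<sigma>\<^sub>c(\<zeta>\<^sub>q)\<close>.\<close>

subsection \<open>Beurling integers and their enumeration\<close>

lemma prod_list_ge_one:
  fixes xs :: "'a::linordered_semidom list"
  assumes "\<forall>x\<in>set xs. 1 \<le> x"
  shows "1 \<le> prod_list xs"
  using assms
proof (induction xs)
  case (Cons a xs)
  then have "1 \<le> a" "1 \<le> prod_list xs" by auto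
  moreover have "0 \<le> a" using \<open>1 \<le> a\<close> by (rule order.trans[OF zero_le_one])
  ultimately show ?case using mult_mono[of 1 a 1 "prod_list xs"] by simp
qed simp

lemma member_le_prod_list:
  fixes xs :: "'a::linordered_semidom list"
  assumes "\<forall>x\<in>set xs. 1 \<le> x" and "y \<in> set xs"
  shows "y \<le> prod_list xs"
  using assms
proof (induction xs)
  case (Cons a xs)
  have "0 \<le> a" "1 \<le> prod_list xs" "0 \<le> prod_list xs"
    using Cons.prems(1) prod_list_ge_one[of xs] by (auto intro: order.trans[OF zero_le_one])
  show ?case
  proof (cases "y = a")
    case True
    then show ?thesis using mult_left_mono[OF \<open>1 \<le> prod_list xs\<close> \<open>0 \<le> a\<close>] by simp
  next
    case False
    then have "y \<le> prod_list xs" using Cons by simp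
    also have "\<dots> \<le> a * prod_list xs"
      using mult_right_mono[of 1 a "prod_list xs"] Cons.prems(1) \<open>0 \<le> prod_list xs\<close> by simp
    finally show ?thesis by simp
  qed
qed simp

lemma power_length_le_prod_list:
  fixes xs :: "'a::linordered_semidom list"
  assumes "0 \<le> a" and "\<forall>x\<in>set xs. a \<le> x"
  shows "a ^ length xs \<le> prod_list xs"
  using assms(2)
proof (induction xs)
  case (Cons b xs)
  then have "a \<le> b" "a ^ length xs \<le> prod_list xs" by auto
  moreover have "0 \<le> b" using assms(1) \<open>a \<le> b\<close> by (rule order.trans)
  ultimately show ?case using mult_mono[of a b "a ^ length xs" "prod_list xs"] assms(1) by simp
qed simp

lemma beurling_integers_ge_one:
  assumes "beurling_primes q" and "v \<in> beurling_integers q"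
  shows "1 \<le> v"
proof -
  obtain xs where "v = prod_list (map q xs)"
    using assms(2) unfolding beurling_integers_def by blast
  moreover have "\<forall>x\<in>set (map q xs). 1 \<le> x"
    using assms(1) unfolding beurling_primes_def by (auto simp: less_imp_le)
  ultimately show ?thesis using prod_list_ge_one by blast
qed

lemma finite_beurling_integers_le:
  assumes "beurling_primes q"
  shows "finite {v \<in> beurling_integers q. v \<le> X}"
proof -
  have q_gt_one: "\<And>i. 1 < q i" and "strict_mono q" and "filterlim q at_top sequentially"
    using assms unfolding beurling_primes_def by auto
  obtain N where N: "\<And>i. N \<le> i \<Longrightarrow> X < q i"
    using \<open>filterlim q at_top sequentially\<close>
    unfolding filterlim_at_top_dense eventually_sequentially by auto
  obtain L where L: "X < q 0 ^ L"
    using real_arch_pow q_gt_one by blast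
  have q_ge: "\<forall>x\<in>set (map q xs). 1 \<le> x" "\<forall>x\<in>set (map q xs). q 0 \<le> x" for xs
    using q_gt_one \<open>strict_mono q\<close> by (auto simp: less_imp_le strict_mono_less_eq)
  have "{v \<in> beurling_integers q. v \<le> X}
      \<subseteq> (\<lambda>xs. prod_list (map q xs)) ` {xs. set xs \<subseteq> {..<N} \<and> length xs \<le> L}"
  proof
    fix v assume "v \<in> {v \<in> beurling_integers q. v \<le> X}"
    then obtain xs where v: "v = prod_list (map q xs)" and le: "prod_list (map q xs) \<le> X"
      unfolding beurling_integers_def by auto
    have "i < N" if "i \<in> set xs" for i
    proof (rule ccontr)
      assume "\<not> i < N"
      then have "X < q i" using N by simp
      also have "q i \<le> prod_list (map q xs)"
        using member_le_prod_list[OF q_ge(1)] that by simp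
      finally show False using le by simp
    qed
    moreover have "length xs \<le> L"
    proof (rule ccontr)
      assume "\<not> length xs \<le> L"
      then have "q 0 ^ L \<le> q 0 ^ length xs"
        using q_gt_one by (intro power_increasing) (auto simp: less_imp_le)
      also have "\<dots> \<le> prod_list (map q xs)"
        using power_length_le_prod_list[OF _ q_ge(2)] q_gt_one[of 0] by simp
      finally show False using le L by simp
    qed
    ultimately show "v \<in> (\<lambda>xs. prod_list (map q xs)) ` {xs. set xs \<subseteq> {..<N} \<and> length xs \<le> L}"
      using v by blast
  qed
  moreover have "finite {xs. set xs \<subseteq> {..<N} \<and> length xs \<le> L}"
    by (rule finite_lists_length_le) auto
  ultimately show ?thesis by (meson finite_imageI finite_subset)
qed

lemma infinite_beurling_integers:
  assumes "beurling_primes q"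
  shows "infinite (beurling_integers q)"
proof
  have "q i \<in> beurling_integers q" for i
    unfolding beurling_integers_def by (rule CollectI, rule exI[of _ "[i]"]) simp
  then have "range q \<subseteq> beurling_integers q" by blast
  moreover assume "finite (beurling_integers q)"
  ultimately have "finite (range q)" by (rule finite_subset)
  moreover have "inj q"
    using assms unfolding beurling_primes_def by (simp add: strict_mono_imp_inj_on)
  ultimately show False by (simp add: finite_image_iff)
qed

text \<open>The rank \<open>v \<mapsto> #{w \<in> S. w < v}\<close> embeds \<open>S\<close> order-preservingly into \<open>\<nat>\<close>.\<close>

lemma ex_strict_mono_enumeration:
  fixes S :: "'a::linorder set"
  assumes "infinite S" and finite_le: "\<And>X. finite {v \<in> S. v \<le> X}"
  shows "\<exists>f::nat \<Rightarrow> 'a. strict_mono f \<and> range f = S"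
proof -
  define g where "g v = card {w \<in> S. w < v}" for v
  have "strict_mono_on S g"
  proof (rule strict_mono_onI)
    fix u v assume "u \<in> S" "v \<in> S" "u < v"
    then show "g u < g v"
      unfolding g_def by (intro psubset_card_mono finite_subset[OF _ finite_le[of v]]) auto
  qed
  then have inj: "inj_on g S" by (rule strict_mono_on_imp_inj_on)
  define T where "T = g ` S"
  have "infinite T"
    unfolding T_def using \<open>infinite S\<close> finite_imageD[OF _ inj] by blast
  then have range_enum: "range (enumerate T) = T"
    using bij_enumerate by (auto simp: bij_betw_def)
  define f where "f = inv_into S g \<circ> enumerate T"
  have "strict_mono f"
  proof (rule strict_monoI)
    fix m n :: nat assume "m < n"
    then have "enumerate T m < enumerate T n" by (rule enumerate_mono[OF _ \<open>infinite T\<close>])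
    moreover obtain u v where "u \<in> S" "v \<in> S" "enumerate T m = g u" "enumerate T n = g v"
      using range_enum unfolding T_def by blast
    ultimately show "f m < f n"
      unfolding f_def using strict_mono_on_less[OF \<open>strict_mono_on S g\<close>] inj by simp
  qed
  moreover have "range f = S"
    unfolding f_def image_comp[symmetric] range_enum unfolding T_def using inj by simp
  ultimately show ?thesis by blast
qed

lemma beurling_nu:
  assumes "beurling_primes q"
  shows "strict_mono (beurling_nu q)" and "range (beurling_nu q) = beurling_integers q"
proof -
  have "\<exists>f::nat \<Rightarrow> real. strict_mono f \<and> range f = beurling_integers q"
    using assms by (intro ex_strict_mono_enumeration infinite_beurling_integers
        finite_beurling_integers_le)
  then have "strict_mono (beurling_nu q) \<and> range (beurling_nu q) = beurling_integers q"
    unfolding beurling_nu_def by (rule someI_ex)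
  then show "strict_mono (beurling_nu q)" "range (beurling_nu q) = beurling_integers q"
    by auto
qed

lemma beurling_nu_ge_one:
  assumes "beurling_primes q"
  shows "1 \<le> beurling_nu q n"
proof (rule beurling_integers_ge_one[OF assms])
  show "beurling_nu q n \<in> beurling_integers q"
    using beurling_nu(2)[OF assms] by blast
qed

subsection \<open>Growth of a sequence from the convergence of its Dirichlet series\<close>

lemma summable_powr_imp_Re_pos:
  fixes \<nu> :: "nat \<Rightarrow> real" and s :: complex
  assumes ge_one: "\<And>n. 1 \<le> \<nu> n" and "summable (\<lambda>n. complex_of_real (\<nu> n) powr (- s))"
  shows "0 < Re s"
proof (rule ccontr)
  assume "\<not> 0 < Re s"
  have "1 \<le> cmod (complex_of_real (\<nu> n) powr (- s))" for n
  proof -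
    have "cmod (complex_of_real (\<nu> n) powr (- s)) = \<nu> n powr (- Re s)"
      using ge_one[of n] by (subst norm_powr_real_powr) auto
    then show ?thesis using ge_one[of n] \<open>\<not> 0 < Re s\<close> by (simp add: ge_one_powr_ge_zero)
  qed
  moreover have "(\<lambda>n. cmod (complex_of_real (\<nu> n) powr (- s))) \<longlonglongrightarrow> 0"
    using summable_LIMSEQ_zero[OF assms(2)] by (rule tendsto_norm_zero)
  ultimately have "1 \<le> (0::real)" by (intro LIMSEQ_le_const) auto
  then show False by simp
qed

lemma norm_exp_mult_diff_le:
  fixes s :: complex
  assumes "v \<le> u" and "0 \<le> Re s"
  shows "cmod (exp (s * of_real u) - exp (s * of_real v)) \<le> cmod s * exp (Re s * u) * (u - v)"
proof -
  define S where "S = {z. v \<le> Re z} \<inter> {z. Re z \<le> u} \<inter> {z. Im z \<le> 0} \<inter> {z::complex. 0 \<le> Im z}"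
  have "convex S"
    unfolding S_def by (intro convex_Int convex_halfspace_Re_ge convex_halfspace_Re_le
        convex_halfspace_Im_le convex_halfspace_Im_ge)
  moreover have "((\<lambda>z. exp (s * z)) has_field_derivative s * exp (s * z)) (at z within S)" for z
    by (auto intro!: derivative_eq_intros)
  moreover have "norm (s * exp (s * z)) \<le> cmod s * exp (Re s * u)" if "z \<in> S" for z
  proof -
    have "Re (s * z) \<le> Re s * u"
      using that assms by (auto simp: S_def intro: mult_left_mono)
    then show ?thesis unfolding norm_mult norm_exp_eq_Re by (intro mult_left_mono) simp_all
  qed
  moreover have "complex_of_real u \<in> S" "complex_of_real v \<in> S"
    using assms by (simp_all add: S_def)
  ultimately have "cmod (exp (s * of_real u) - exp (s * of_real v))
      \<le> cmod s * exp (Re s * u) * cmod (of_real u - of_real v)"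
    by (rule field_differentiable_bound)
  also have "cmod (of_real u - of_real v) = u - v"
    using assms(1) by (simp flip: of_real_diff)
  finally show ?thesis .
qed

lemma sum_norm_diff_exp_mult_le:
  fixes s :: complex and L :: "nat \<Rightarrow> real"
  assumes "mono L" and "0 \<le> Re s"
  shows "(\<Sum>n<N. cmod (exp (s * of_real (L (Suc n))) - exp (s * of_real (L n))))
    \<le> cmod s * exp (Re s * L N) * (L N - L 0)"
proof -
  have "cmod (exp (s * of_real (L (Suc n))) - exp (s * of_real (L n)))
      \<le> cmod s * exp (Re s * L N) * (L (Suc n) - L n)" if "n < N" for n
  proof -
    have "L n \<le> L (Suc n)" "L (Suc n) \<le> L N"
      using that \<open>mono L\<close> by (auto simp: mono_def)
    then have "cmod (exp (s * of_real (L (Suc n))) - exp (s * of_real (L n)))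
        \<le> cmod s * exp (Re s * L (Suc n)) * (L (Suc n) - L n)"
      using assms(2) by (intro norm_exp_mult_diff_le)
    also have "\<dots> \<le> cmod s * exp (Re s * L N) * (L (Suc n) - L n)"
      using \<open>L n \<le> L (Suc n)\<close> \<open>L (Suc n) \<le> L N\<close> assms(2)
      by (intro mult_right_mono mult_left_mono) (auto intro: mult_left_mono)
    finally show ?thesis .
  qed
  then have "(\<Sum>n<N. cmod (exp (s * of_real (L (Suc n))) - exp (s * of_real (L n))))
      \<le> (\<Sum>n<N. cmod s * exp (Re s * L N) * (L (Suc n) - L n))"
    by (intro sum_mono) simp
  also have "\<dots> = cmod s * exp (Re s * L N) * (L N - L 0)"
    by (simp add: sum_distrib_left[symmetric] sum_lessThan_telescope)
  finally show ?thesis .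
qed

lemma sum_mult_by_parts:
  fixes a c :: "nat \<Rightarrow> 'a::comm_ring"
  shows "(\<Sum>n\<le>N. a n * c n)
    = (\<Sum>n\<le>N. a n) * c N - (\<Sum>n<N. (\<Sum>k\<le>n. a k) * (c (Suc n) - c n))"
  by (induction N) (simp_all add: algebra_simps)

lemma one_plus_mult_le_exp:
  fixes a t \<epsilon> :: real
  assumes "0 \<le> a" and "0 \<le> t" and "0 < \<epsilon>"
  shows "1 + a * t \<le> (1 + a / \<epsilon>) * exp (\<epsilon> * t)"
proof -
  have "\<epsilon> * t \<le> exp (\<epsilon> * t)" using exp_ge_add_one_self[of "\<epsilon> * t"] by linarith
  then have "t \<le> exp (\<epsilon> * t) / \<epsilon>" using assms(3) by (simp add: pos_le_divide_eq mult.commute)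
  then have "a * t \<le> a * (exp (\<epsilon> * t) / \<epsilon>)" using assms(1) by (rule mult_left_mono)
  moreover have "1 \<le> exp (\<epsilon> * t)" using assms(2,3) by simp
  ultimately have "1 + a * t \<le> exp (\<epsilon> * t) + a * (exp (\<epsilon> * t) / \<epsilon>)" by linarith
  also have "\<dots> = (1 + a / \<epsilon>) * exp (\<epsilon> * t)" by (simp add: algebra_simps)
  finally show ?thesis .
qed

text \<open>Sum \<open>exp(-s L\<^sub>n) exp(s L\<^sub>n) = 1\<close> over \<open>n \<le> N\<close> by parts against the bounded partial sums
  of \<open>exp(-s L\<^sub>n)\<close>; the increments of \<open>exp(s L\<^sub>n)\<close> are controlled by the mean value theorem.\<close>

lemma partial_summation_counting_bound:
  fixes s :: complex and L :: "nat \<Rightarrow> real"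
  assumes "mono L" and "\<And>n. 0 \<le> L n" and "0 \<le> Re s"
    and M: "\<And>N. cmod (\<Sum>n\<le>N. exp (- s * of_real (L n))) \<le> M"
  shows "real (Suc N) \<le> M * exp (Re s * L N) * (1 + cmod s * L N)"
proof -
  define A where "A N = (\<Sum>n\<le>N. exp (- s * of_real (L n)))" for N
  define c where "c n = exp (s * of_real (L n))" for n
  have "0 \<le> M" by (rule order.trans[OF norm_ge_zero M])
  have "(\<Sum>n\<le>N. exp (- s * of_real (L n)) * c n) = of_nat (Suc N)"
    by (simp add: c_def mult_exp_exp)
  then have "real (Suc N) = cmod (\<Sum>n\<le>N. exp (- s * of_real (L n)) * c n)"
    by (simp only: norm_of_nat)
  also have "\<dots> \<le> cmod (A N * c N) + cmod (\<Sum>n<N. A n * (c (Suc n) - c n))"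
    unfolding sum_mult_by_parts A_def by (rule norm_triangle_ineq4)
  also have "\<dots> \<le> M * exp (Re s * L N) + M * (cmod s * exp (Re s * L N) * (L N - L 0))"
  proof (rule add_mono)
    have "cmod (c N) = exp (Re s * L N)" by (simp add: c_def)
    then show "cmod (A N * c N) \<le> M * exp (Re s * L N)"
      unfolding norm_mult A_def using M by (metis mult_right_mono norm_ge_zero)
    have "cmod (\<Sum>n<N. A n * (c (Suc n) - c n)) \<le> (\<Sum>n<N. M * cmod (c (Suc n) - c n))"
      using M unfolding A_def
      by (intro order.trans[OF norm_sum] sum_mono) (auto simp: norm_mult intro: mult_right_mono)
    also have "\<dots> \<le> M * (cmod s * exp (Re s * L N) * (L N - L 0))"
      unfolding sum_distrib_left[symmetric] c_def using \<open>0 \<le> M\<close> assms(1,3)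
      by (intro mult_left_mono sum_norm_diff_exp_mult_le)
    finally show "cmod (\<Sum>n<N. A n * (c (Suc n) - c n))
        \<le> M * (cmod s * exp (Re s * L N) * (L N - L 0))" .
  qed
  also have "\<dots> \<le> M * exp (Re s * L N) * (1 + cmod s * L N)"
  proof -
    have "0 \<le> M * cmod s * exp (Re s * L N) * L 0" using \<open>0 \<le> M\<close> assms(2) by simp
    then show ?thesis by (simp add: algebra_simps)
  qed
  finally show ?thesis .
qed

lemma counting_bound_of_summable_powr:
  fixes \<nu> :: "nat \<Rightarrow> real" and s :: complex
  assumes "mono \<nu>" and ge_one: "\<And>n. 1 \<le> \<nu> n"
    and summable: "summable (\<lambda>n. complex_of_real (\<nu> n) powr (- s))" and "Re s < \<sigma>"
  shows "\<exists>C\<ge>0. \<forall>n. real (Suc n) \<le> C * \<nu> n powr \<sigma>"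
proof -
  have "0 < Re s" using ge_one summable by (rule summable_powr_imp_Re_pos)
  have \<nu>_pos: "0 < \<nu> n" for n using ge_one[of n] by simp
  define L where "L n = ln (\<nu> n)" for n
  have "mono L" "\<And>n. 0 \<le> L n"
    using \<open>mono \<nu>\<close> \<nu>_pos ge_one by (auto simp: L_def mono_def)
  have "exp (- s * of_real (L n)) = complex_of_real (\<nu> n) powr (- s)" for n
    using \<nu>_pos[of n] by (simp add: L_def powr_def Ln_of_real)
  then have "Bseq (\<lambda>N. \<Sum>n\<le>N. exp (- s * of_real (L n)))"
    using summable unfolding summable_iff_convergent' by (simp add: convergent_imp_Bseq)
  then obtain M where "M > 0" and M: "\<And>N. cmod (\<Sum>n\<le>N. exp (- s * of_real (L n))) \<le> M"
    by (meson BseqE)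
  define \<epsilon> where "\<epsilon> = \<sigma> - Re s"
  have "0 < \<epsilon>" using \<open>Re s < \<sigma>\<close> by (simp add: \<epsilon>_def)
  have "real (Suc N) \<le> M * (1 + cmod s / \<epsilon>) * \<nu> N powr \<sigma>" for N
  proof -
    have "real (Suc N) \<le> M * exp (Re s * L N) * (1 + cmod s * L N)"
      using \<open>mono L\<close> \<open>\<And>n. 0 \<le> L n\<close> \<open>0 < Re s\<close> M by (intro partial_summation_counting_bound) auto
    also have "\<dots> \<le> M * exp (Re s * L N) * ((1 + cmod s / \<epsilon>) * exp (\<epsilon> * L N))"
      using \<open>M > 0\<close> \<open>0 < \<epsilon>\<close> \<open>0 \<le> L N\<close> by (intro mult_left_mono one_plus_mult_le_exp) auto
    also have "\<dots> = M * (1 + cmod s / \<epsilon>) * \<nu> N powr \<sigma>"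
      using \<nu>_pos[of N] by (simp add: L_def \<epsilon>_def powr_def mult_exp_exp algebra_simps)
    finally show ?thesis .
  qed
  moreover have "0 \<le> M * (1 + cmod s / \<epsilon>)" using \<open>M > 0\<close> \<open>0 < \<epsilon>\<close> by simp
  ultimately show ?thesis by blast
qed

subsection \<open>Metric Diophantine approximation by ratios of a sparse sequence\<close>

lemma counting_function_le:
  fixes \<nu> :: "nat \<Rightarrow> real"
  assumes count: "\<And>n. real (Suc n) \<le> C * \<nu> n powr \<sigma>" and "0 \<le> C" and "0 \<le> \<sigma>"
    and "\<And>n. 0 \<le> \<nu> n"
  shows "finite {m. \<nu> m \<le> Y}" and "real (card {m. \<nu> m \<le> Y}) \<le> C * Y powr \<sigma>"
proof -
  define T where "T = C * Y powr \<sigma>"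
  have sub: "{m. \<nu> m \<le> Y} \<subseteq> {..<nat \<lfloor>T\<rfloor>}"
  proof
    fix m assume "m \<in> {m. \<nu> m \<le> Y}"
    then have "\<nu> m powr \<sigma> \<le> Y powr \<sigma>" using assms(3,4) by (auto intro: powr_mono2)
    then have "real (Suc m) \<le> T"
      unfolding T_def using count[of m] \<open>0 \<le> C\<close> by (meson mult_left_mono order.trans)
    then have "int (Suc m) \<le> \<lfloor>T\<rfloor>" by (simp add: le_floor_iff)
    then show "m \<in> {..<nat \<lfloor>T\<rfloor>}" by simp
  qed
  then show "finite {m. \<nu> m \<le> Y}" by (rule finite_subset) simp
  have "real (card {m. \<nu> m \<le> Y}) \<le> real (nat \<lfloor>T\<rfloor>)"
    using card_mono[OF _ sub] by simp
  also have "\<dots> \<le> T" using \<open>0 \<le> C\<close> by (simp add: T_def)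
  finally show "real (card {m. \<nu> m \<le> Y}) \<le> C * Y powr \<sigma>" by (simp add: T_def)
qed

lemma summable_powr_of_counting_bound:
  fixes \<nu> :: "nat \<Rightarrow> real"
  assumes count: "\<And>n. real (Suc n) \<le> C * \<nu> n powr \<sigma>" and "0 < \<sigma>" and "\<sigma> < t"
    and \<nu>_pos: "\<And>n. 0 < \<nu> n"
  shows "summable (\<lambda>n. \<nu> n powr (- t))"
proof -
  have "0 < C" using count[of 0] by (metis not_le mult_nonpos_nonneg powr_ge_zero of_nat_0_less_iff zero_less_Suc order.strict_trans2)
  define p where "p = t / \<sigma>"
  have "1 < p" using assms(2,3) by (simp add: p_def)
  have le: "\<nu> n powr (- t) \<le> C powr p * real (Suc n) powr (- p)" for n
  proof -
    have "\<nu> n powr (- t) = (\<nu> n powr \<sigma>) powr (- p)"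
      using \<open>0 < \<sigma>\<close> by (simp add: powr_powr p_def)
    also have "\<dots> \<le> (real (Suc n) / C) powr (- p)"
      using count[of n] \<open>0 < C\<close> \<open>1 < p\<close> by (intro powr_mono2') (auto simp: divide_le_eq mult.commute)
    also have "\<dots> = C powr p * real (Suc n) powr (- p)"
      using \<open>0 < C\<close> by (simp add: powr_minus_divide powr_divide)
    finally show ?thesis .
  qed
  have "summable (\<lambda>n. C powr p * real (Suc n) powr (- p))"
    using \<open>1 < p\<close> summable_Suc_iff[of "\<lambda>n. real n powr (- p)"]
    by (intro summable_mult) (simp add: summable_real_powr_iff)
  then show ?thesis
    by (rule summable_comparison_test') (use le in simp)
qed

lemma AE_finitely_many_near_centres:
  fixes c :: "nat \<Rightarrow> nat \<Rightarrow> real" and d :: "nat \<Rightarrow> real"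
  assumes finite_S: "\<And>n. finite (S n)" and "\<And>n. 0 \<le> d n"
    and summable: "summable (\<lambda>n. real (card (S n)) * d n)"
  shows "AE x in lborel. finite {(m, n). m \<in> S n \<and> \<bar>x - c m n\<bar> < d n}"
proof -
  define E where "E n = (\<Union>m\<in>S n. {c m n - d n <..< c m n + d n})" for n
  have E_sets: "E n \<in> sets lborel" for n
    unfolding E_def using finite_S by (intro sets.finite_UN) auto
  have "emeasure lborel (E n) < \<infinity>" for n
    unfolding E_def using finite_S by (intro emeasure_bounded_finite bounded_UN) auto
  moreover have "summable (\<lambda>n. measure lborel (E n))"
  proof (rule summable_comparison_test')
    show "summable (\<lambda>n. 2 * (real (card (S n)) * d n))"
      using summable by (rule summable_mult)
    fix n
    have "measure lborel (E n) \<le> (\<Sum>m\<in>S n. measure lborel {c m n - d n <..< c m n + d n})"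
      unfolding E_def by (rule measure_UNION_le[OF finite_S]) simp
    also have "\<dots> = 2 * (real (card (S n)) * d n)"
      using \<open>0 \<le> d n\<close> by simp
    finally show "norm (measure lborel (E n)) \<le> 2 * (real (card (S n)) * d n)" by simp
  qed
  ultimately have "AE x in lborel. eventually (\<lambda>n. x \<in> space lborel - E n) sequentially"
    using E_sets by (intro borel_cantelli_AE1)
  then show ?thesis
  proof (rule eventually_mono)
    fix x assume "eventually (\<lambda>n. x \<in> space lborel - E n) sequentially"
    then obtain N where N: "\<And>n. N \<le> n \<Longrightarrow> x \<notin> E n"
      unfolding eventually_sequentially by auto
    have "{(m, n). m \<in> S n \<and> \<bar>x - c m n\<bar> < d n} \<subseteq> (\<lambda>(n, m). (m, n)) ` (SIGMA n:{..<N}. S n)"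
    proof clarify
      fix m n assume "m \<in> S n" "\<bar>x - c m n\<bar> < d n"
      then have "x \<in> E n" unfolding E_def by (intro UN_I[of m]) (auto simp: abs_less_iff)
      then have "n < N" using N not_le by blast
      then show "(m, n) \<in> (\<lambda>(n, m). (m, n)) ` (SIGMA n:{..<N}. S n)"
        using \<open>m \<in> S n\<close> by force
    qed
    then show "finite {(m, n). m \<in> S n \<and> \<bar>x - c m n\<bar> < d n}"
      by (rule finite_subset) (auto intro: finite_S)
  qed
qed

lemma AE_bounded_finite_approximations_of_counting_bound:
  fixes \<nu> :: "nat \<Rightarrow> real" and K :: nat
  assumes count: "\<And>n. real (Suc n) \<le> C * \<nu> n powr \<sigma>" and "0 \<le> C" and "0 < \<sigma>"
    and "2 * \<sigma> < r" and ge_one: "\<And>n. 1 \<le> \<nu> n"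
  shows "AE x in lborel. \<bar>x\<bar> < real K \<longrightarrow> finite {(m, n). \<bar>x - \<nu> m / \<nu> n\<bar> < \<nu> n powr (- r)}"
proof -
  have \<nu>_pos: "0 < \<nu> n" for n using ge_one[of n] by simp
  define S where "S n = {m. \<nu> m \<le> (real K + 1) * \<nu> n}" for n
  note count_S = counting_function_le[OF count \<open>0 \<le> C\<close> less_imp_le[OF \<open>0 < \<sigma>\<close>]
      less_imp_le[OF \<nu>_pos], of "(real K + 1) * \<nu> _", folded S_def]
  have "summable (\<lambda>n. real (card (S n)) * \<nu> n powr (- r))"
  proof (rule summable_comparison_test')
    show "summable (\<lambda>n. C * (real K + 1) powr \<sigma> * \<nu> n powr (- (r - \<sigma>)))"
      using count \<open>0 < \<sigma>\<close> \<open>2 * \<sigma> < r\<close> \<nu>_pos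
      by (intro summable_mult summable_powr_of_counting_bound) auto
    fix n
    have "real (card (S n)) * \<nu> n powr (- r) \<le> C * ((real K + 1) * \<nu> n) powr \<sigma> * \<nu> n powr (- r)"
      by (rule mult_right_mono[OF count_S(2)]) simp
    also have "\<dots> = C * (real K + 1) powr \<sigma> * \<nu> n powr (- (r - \<sigma>))"
      using \<nu>_pos[of n] by (simp add: powr_mult powr_add[symmetric])
    finally show "norm (real (card (S n)) * \<nu> n powr (- r))
        \<le> C * (real K + 1) powr \<sigma> * \<nu> n powr (- (r - \<sigma>))" by simp
  qed
  then have "AE x in lborel. finite {(m, n). m \<in> S n \<and> \<bar>x - \<nu> m / \<nu> n\<bar> < \<nu> n powr (- r)}"
    using count_S(1) by (intro AE_finitely_many_near_centres) auto
  then show ?thesis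
  proof (rule eventually_mono, intro impI)
    fix x assume fin: "finite {(m, n). m \<in> S n \<and> \<bar>x - \<nu> m / \<nu> n\<bar> < \<nu> n powr (- r)}"
      and "\<bar>x\<bar> < real K"
    have "m \<in> S n" if "\<bar>x - \<nu> m / \<nu> n\<bar> < \<nu> n powr (- r)" for m n
    proof -
      have "\<nu> n powr (- r) \<le> 1"
        using powr_mono[of "- r" 0 "\<nu> n"] ge_one[of n] \<open>0 < \<sigma>\<close> \<open>2 * \<sigma> < r\<close> by simp
      then have "\<nu> m / \<nu> n \<le> real K + 1"
        using that \<open>\<bar>x\<bar> < real K\<close> by (auto simp: abs_less_iff)
      then show ?thesis using \<nu>_pos[of n] by (simp add: S_def divide_le_eq)
    qed
    then show "finite {(m, n). \<bar>x - \<nu> m / \<nu> n\<bar> < \<nu> n powr (- r)}"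
      by (auto intro: finite_subset[OF _ fin])
  qed
qed

lemma AE_finite_approximations_of_counting_bound:
  fixes \<nu> :: "nat \<Rightarrow> real"
  assumes "\<And>n. real (Suc n) \<le> C * \<nu> n powr \<sigma>" and "0 \<le> C" and "0 < \<sigma>"
    and "2 * \<sigma> < r" and "\<And>n. 1 \<le> \<nu> n"
  shows "AE x in lborel. finite {(m, n). \<bar>x - \<nu> m / \<nu> n\<bar> < \<nu> n powr (- r)}"
proof -
  have "AE x in lborel. \<forall>K::nat. \<bar>x\<bar> < real K \<longrightarrow> finite {(m, n). \<bar>x - \<nu> m / \<nu> n\<bar> < \<nu> n powr (- r)}"
    unfolding AE_all_countable using AE_bounded_finite_approximations_of_counting_bound[OF assms] by blast
  then show ?thesis
    by (rule eventually_mono) (meson reals_Archimedean2)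
qed

subsection \<open>The irrationality measure of almost every real\<close>

lemma beurling_sigma_c_nonneg:
  assumes "beurling_primes q"
  shows "0 \<le> beurling_sigma_c q"
proof -
  have "0 \<le> x" if "x \<in> {ereal (Re s) |s. summable (\<lambda>n. complex_of_real (beurling_nu q n) powr (- s))}" for x
    using that summable_powr_imp_Re_pos[of "beurling_nu q", OF beurling_nu_ge_one[OF assms]]
    by (force simp: less_imp_le)
  then show ?thesis unfolding beurling_sigma_c_def by (rule Inf_greatest)
qed

lemma beurling_counting_bound:
  assumes "beurling_primes q" and "beurling_sigma_c q < ereal \<sigma>"
  shows "\<exists>C\<ge>0. \<forall>n. real (Suc n) \<le> C * beurling_nu q n powr \<sigma>"
proof -
  obtain s where "summable (\<lambda>n. complex_of_real (beurling_nu q n) powr (- s))" and "Re s < \<sigma>"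
    using assms(2) unfolding beurling_sigma_c_def by (auto simp: Inf_less_iff)
  then show ?thesis
    using beurling_nu[OF assms(1)] beurling_nu_ge_one[OF assms(1)]
    by (intro counting_bound_of_summable_powr) (auto intro: strict_mono_mono)
qed

lemma AE_finite_beurling_approximations:
  assumes "beurling_primes q" and "2 * beurling_sigma_c q < ereal r"
  shows "AE x in lborel. finite {(m, n). \<bar>x - beurling_nu q m / beurling_nu q n\<bar>
    < beurling_nu q n powr (- r)}"
proof -
  obtain \<sigma> where \<sigma>: "beurling_sigma_c q = ereal \<sigma>" and "0 \<le> \<sigma>" and "2 * \<sigma> < r"
    using assms(2) beurling_sigma_c_nonneg[OF assms(1)] by (cases "beurling_sigma_c q") auto
  define \<sigma>\<^sub>1 where "\<sigma>\<^sub>1 = (2 * \<sigma> + r) / 4"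
  have "beurling_sigma_c q < ereal \<sigma>\<^sub>1" using \<open>2 * \<sigma> < r\<close> by (simp add: \<sigma> \<sigma>\<^sub>1_def)
  then obtain C where "0 \<le> C" "\<forall>n. real (Suc n) \<le> C * beurling_nu q n powr \<sigma>\<^sub>1"
    using beurling_counting_bound[OF assms(1)] by blast
  moreover have "0 < \<sigma>\<^sub>1" "2 * \<sigma>\<^sub>1 < r"
    using \<open>0 \<le> \<sigma>\<close> \<open>2 * \<sigma> < r\<close> by (simp_all add: \<sigma>\<^sub>1_def)
  ultimately show ?thesis
    using beurling_nu_ge_one[OF assms(1)] by (intro AE_finite_approximations_of_counting_bound) auto
qed

lemma beurling_mu_le:
  assumes "0 \<le> \<rho>"
    and "\<And>k. finite {(m, n). \<bar>x - beurling_nu q m / beurling_nu q n\<bar>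
      < beurling_nu q n powr (- (\<rho> + 1 / real (Suc k)))}"
  shows "beurling_mu q x \<le> ereal \<rho>"
proof (rule ereal_le_epsilon2)
  fix e :: real assume "0 < e"
  then obtain k where k: "1 / real (Suc k) < e" by (rule nat_approx_posE)
  have "beurling_mu q x \<le> ereal (\<rho> + 1 / real (Suc k))"
    unfolding beurling_mu_def using assms by (intro Inf_lower) (auto simp: add_nonneg_pos)
  also have "\<dots> \<le> ereal \<rho> + ereal e" using k by simp
  finally show "beurling_mu q x \<le> ereal \<rho> + ereal e" .
qed

theorem proposition3p1:
  fixes q :: "nat \<Rightarrow> real"
  assumes "beurling_primes q"
    and "beurling_sigma_c q < \<infinity>"
  shows "AE x in lborel. beurling_mu q x \<le> 2 * beurling_sigma_c q"
proof -
  obtain \<sigma> where \<sigma>: "beurling_sigma_c q = ereal \<sigma>" and "0 \<le> \<sigma>"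
    using assms(2) beurling_sigma_c_nonneg[OF assms(1)] by (cases "beurling_sigma_c q") auto
  have "AE x in lborel. \<forall>k. finite {(m, n). \<bar>x - beurling_nu q m / beurling_nu q n\<bar>
      < beurling_nu q n powr (- (2 * \<sigma> + 1 / real (Suc k)))}"
    unfolding AE_all_countable using \<sigma> by (intro allI AE_finite_beurling_approximations[OF assms(1)]) simp
  then show ?thesis
  proof (rule eventually_mono)
    fix x assume "\<forall>k. finite {(m, n). \<bar>x - beurling_nu q m / beurling_nu q n\<bar>
      < beurling_nu q n powr (- (2 * \<sigma> + 1 / real (Suc k)))}"
    then have "beurling_mu q x \<le> ereal (2 * \<sigma>)" using \<open>0 \<le> \<sigma>\<close> by (intro beurling_mu_le) auto
    then show "beurling_mu q x \<le> 2 * beurling_sigma_c q" by (simp add: \<sigma>)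
  qed
qed

end
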